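(* Let $J=JCK(Z,\delta)$ and $K=Z\oplus Zx$. Then: (i) every odd derivation of $J$ is inner, $\mathrm{Der}(J)_{\bar1}=\mathrm{Inder}(J)_{\bar1}$; (ii) the restriction map $\mathrm{Der}(J)^{[\bar0,\bar0]}\to\mathrm{Der}(K)$, $\partial\mapsto\partial|_K$, is injective with image $\overline{\mathrm{Der}}(K)$; (iii) $\dim_{\mathbb F}\mathrm{Der}(J)_{\bar1}=4\dim_{\mathbb F}Z=\dim_{\mathbb F}J_{\bar1}$ (dimensions as cardinals).
   Context: Let $\mathbb F$ be a field of characteristic $\neq 2$, $Z$ a unital commutative associative $\mathbb F$-algebra, and $\delta$ a derivation of $Z$ such that $Z\delta(Z)=Z$ (the $\mathbb F$-span of all products $f\delta(g)$, $f,g\in Z$, is $Z$). The Cheng-Kac Jordan superalgebra $J=JCK(Z,\delta)=J_{\bar0}\oplus J_{\bar1}$ is defined as follows: $J_{\bar0}=Z1\oplus Zw_1\oplus Zw_2\oplus Zw_3$ and $J_{\bar1}=Zx\oplus Zx_1\oplus Zx_2\oplus Zx_3$ are free $Z$-modules of rank 4; $J_{\bar0}$ is the $Z$-algebra $(\mathbb F1\oplus\mathbb Fw_1\oplus\mathbb Fw_2\oplus\mathbb Fw_3)\otimes_{\mathbb F}Z$ with $1$ the identity, $w_1^2=w_2^2=1$, $w_3^2=-1$, $w_iw_j=0$ for $i\ne j$. For $f,g\in Z$ and $i,j\in\{1,2,3\}$ the remaining products are: $f(gx)=(fg)x$, $f(gx_j)=(fg)x_j$, $(fw_i)(gx)=(\delta(f)g)x_i$,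 $(fw_i)(gx_j)=-(fg)x_{i\times j}$, $(fx)(gx)=\delta(f)g-f\delta(g)$, $(fx)(gx_j)=-(fg)w_j$, $(fx_i)(gx)=(fg)w_i$, $(fx_i)(gx_j)=0$, extended by supercommutativity ($ab=(-1)^{|a||b|}ba$), where $x_{1\times2}=-x_{2\times1}=x_3$, $x_{1\times3}=-x_{3\times1}=x_2$, $x_{3\times2}=-x_{2\times3}=x_1$, $x_{i\times i}=0$. $J$ is $\mathbb Z_2^2$-graded by $J^{[\bar0,\bar0]}=Z\oplus Zx$, $J^{[\bar1,\bar0]}=Zw_1\oplus Zx_1$, $J^{[\bar0,\bar1]}=Zw_2\oplus Zx_2$, $J^{[\bar1,\bar1]}=Zw_3\oplus Zx_3$, and $\mathrm{Der}(J)^{\alpha}$ denotes the derivations mapping each $J^{\beta}$ into $J^{\alpha+\beta}$. Derivations are super derivations; $D(a,b)$ is $c\mapsto a(bc)-(-1)^{|a||b|}b(ac)$ and $\mathrm{Inder}$ is the span of all $D(a,b)$. $K=Z\oplus Zx$ is a subalgebra of $J$. For $a\in Z$, $\eta_a$ is the odd derivation of $K$ with $\eta_a(Z)=0$, $\eta_a(x)=a$. $\overline{\mathrm{Der}}(K)$ denotes the subalgebra $\mathrm{Der}(K)_{\bar0}\oplus\{\eta_a:a\in Z\}$ of $\mathrm{Der}(K)$. *)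

theory Defs
  imports Main "HOL.Vector_Spaces" "HOL-Library.Function_Algebras" "HOL-Library.Equipollence"
begin

text \<open>An element of J is
  a function from the eight free Z-module generators to Z (its coordinates):
  One (=1), W i (=w_i), X (=x), Xi i (=x_i), for i in {1,2,3}.\<close>

datatype idx = I1 | I2 | I3
datatype cb = One | W idx | X | Xi idx

type_synonym 'z jck = "cb \<Rightarrow> 'z"

definition cbs :: "cb set" where
  "cbs = {One, W I1, W I2, W I3, X, Xi I1, Xi I2, Xi I3}"

definition single :: "cb \<Rightarrow> 'z::zero \<Rightarrow> 'z jck" where
  "single e f = (\<lambda>k. if k = e then f else 0)"

fun wsq :: "idx \<Rightarrow> 'z::comm_ring_1" where
  "wsq I1 = 1" | "wsq I2 = 1" | "wsq I3 = -1"

fun xcross :: "idx \<Rightarrow> idx \<Rightarrow> 'z::comm_ring_1 \<Rightarrow> 'z jck" where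
  "xcross I1 I2 f = single (Xi I3) f"
| "xcross I2 I1 f = single (Xi I3) (- f)"
| "xcross I1 I3 f = single (Xi I2) f"
| "xcross I3 I1 f = single (Xi I2) (- f)"
| "xcross I3 I2 f = single (Xi I1) f"
| "xcross I2 I3 f = single (Xi I1) (- f)"
| "xcross I1 I1 f = 0"
| "xcross I2 I2 f = 0"
| "xcross I3 I3 f = 0"

text \<open>bprod d f e g e' is the product (f e)(g e') of the generator multiples,
  as given in the definition (odd-even products by supercommutativity).\<close>
fun bprod :: "('z::comm_ring_1 \<Rightarrow> 'z) \<Rightarrow> 'z \<Rightarrow> cb \<Rightarrow> 'z \<Rightarrow> cb \<Rightarrow> 'z jck" where
  "bprod d f One g e' = single e' (f * g)"
| "bprod d f (W i) g One = single (W i) (f * g)"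
| "bprod d f (W i) g (W j) = (if i = j then single One (wsq i * (f * g)) else 0)"
| "bprod d f (W i) g X = single (Xi i) (d f * g)"
| "bprod d f (W i) g (Xi j) = - xcross i j (f * g)"
| "bprod d f X g One = single X (f * g)"
| "bprod d f X g (W i) = single (Xi i) (d g * f)"
| "bprod d f X g X = single One (d f * g - f * d g)"
| "bprod d f X g (Xi j) = single (W j) (- (f * g))"
| "bprod d f (Xi i) g One = single (Xi i) (f * g)"
| "bprod d f (Xi i) g (W j) = - xcross j i (f * g)"
| "bprod d f (Xi i) g X = single (W i) (f * g)"
| "bprod d f (Xi i) g (Xi j) = 0"

definition jmult :: "('z::comm_ring_1 \<Rightarrow> 'z) \<Rightarrow> 'z jck \<Rightarrow> 'z jck \<Rightarrow> 'z jck" where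
  "jmult d a b = (\<Sum>e\<in>cbs. \<Sum>e'\<in>cbs. bprod d (a e) e (b e') e')"

definition sJ :: "('f \<Rightarrow> 'z \<Rightarrow> 'z) \<Rightarrow> 'f \<Rightarrow> 'z jck \<Rightarrow> 'z jck" where
  "sJ sc c v = (\<lambda>k. sc c (v k))"

definition sE :: "('f \<Rightarrow> 'z \<Rightarrow> 'z) \<Rightarrow> 'f \<Rightarrow> ('z jck \<Rightarrow> 'z jck) \<Rightarrow> ('z jck \<Rightarrow> 'z jck)" where
  "sE sc c D = (\<lambda>v. sJ sc c (D v))"

text \<open>Z_2-grading: parity of generators; Jpar False = J_0, Jpar True = J_1.\<close>
fun isodd :: "cb \<Rightarrow> bool" where
  "isodd One = False" | "isodd (W i) = False" | "isodd X = True" | "isodd (Xi i) = True"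

definition Jpar :: "bool \<Rightarrow> ('z::zero) jck set" where
  "Jpar q = {v. \<forall>k. isodd k \<noteq> q \<longrightarrow> v k = 0}"

text \<open>Z_2^2-grading; False/True encode 0/1 in Z_2.\<close>
fun gr :: "cb \<Rightarrow> bool \<times> bool" where
  "gr One = (False, False)" | "gr X = (False, False)"
| "gr (W I1) = (True, False)" | "gr (Xi I1) = (True, False)"
| "gr (W I2) = (False, True)" | "gr (Xi I2) = (False, True)"
| "gr (W I3) = (True, True)" | "gr (Xi I3) = (True, True)"

definition Jgr :: "bool \<times> bool \<Rightarrow> ('z::zero) jck set" where
  "Jgr \<beta> = {v. \<forall>k. gr k \<noteq> \<beta> \<longrightarrow> v k = 0}"

definition Kset :: "('z::zero) jck set" where
  "Kset = {v. \<forall>k. k \<notin> {One, X} \<longrightarrow> v k = 0}"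

text \<open>Homogeneous super derivation of parity p (False = even, True = odd) of
  the subalgebra with carrier A (A = UNIV for J, A = Kset for K).  As a map
  J -> J it is taken to be 0 outside A.\<close>
definition is_sder :: "('f \<Rightarrow> 'z \<Rightarrow> 'z) \<Rightarrow> ('z::comm_ring_1 \<Rightarrow> 'z) \<Rightarrow> 'z jck set \<Rightarrow> bool
    \<Rightarrow> ('z jck \<Rightarrow> 'z jck) \<Rightarrow> bool" where
  "is_sder sc d A p D \<longleftrightarrow>
     (\<forall>v. v \<notin> A \<longrightarrow> D v = 0) \<and>
     (\<forall>v\<in>A. D v \<in> A) \<and>
     (\<forall>u\<in>A. \<forall>v\<in>A. D (u + v) = D u + D v) \<and>
     (\<forall>c. \<forall>v\<in>A. D (sJ sc c v) = sJ sc c (D v)) \<and>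
     (\<forall>q. \<forall>v\<in>A. v \<in> Jpar q \<longrightarrow> D v \<in> Jpar (q \<noteq> p)) \<and>
     (\<forall>q. \<forall>a\<in>A. \<forall>b\<in>A. a \<in> Jpar q \<longrightarrow>
        D (jmult d a b) = jmult d (D a) b +
          (if p \<and> q then - jmult d a (D b) else jmult d a (D b)))"

definition Der :: "('f \<Rightarrow> 'z \<Rightarrow> 'z) \<Rightarrow> ('z::comm_ring_1 \<Rightarrow> 'z) \<Rightarrow> 'z jck set
    \<Rightarrow> ('z jck \<Rightarrow> 'z jck) set" where
  "Der sc d A = {D0 + D1 | D0 D1. is_sder sc d A False D0 \<and> is_sder sc d A True D1}"

definition Dop :: "('z::comm_ring_1 \<Rightarrow> 'z) \<Rightarrow> bool \<Rightarrow> 'z jck \<Rightarrow> bool \<Rightarrow> 'z jck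
    \<Rightarrow> ('z jck \<Rightarrow> 'z jck)" where
  "Dop d qa a qb b = (\<lambda>c. jmult d a (jmult d b c) -
      (if qa \<and> qb then - jmult d b (jmult d a c) else jmult d b (jmult d a c)))"

definition Inder :: "('f::field \<Rightarrow> 'z \<Rightarrow> 'z) \<Rightarrow> ('z::comm_ring_1 \<Rightarrow> 'z)
    \<Rightarrow> ('z jck \<Rightarrow> 'z jck) set" where
  "Inder sc d = module.span (sE sc)
     {Dop d qa a qb b | qa a qb b. a \<in> Jpar qa \<and> b \<in> Jpar qb}"

definition odd_map :: "('z::zero jck \<Rightarrow> 'z jck) \<Rightarrow> bool" where
  "odd_map D \<longleftrightarrow> (\<forall>q v. v \<in> Jpar q \<longrightarrow> D v \<in> Jpar (\<not> q))"

definition Der00 :: "('f \<Rightarrow> 'z \<Rightarrow> 'z) \<Rightarrow> ('z::comm_ring_1 \<Rightarrow> 'z) \<Rightarrow> ('z jck \<Rightarrow> 'z jck) set" where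
  "Der00 sc d = {D \<in> Der sc d UNIV. \<forall>\<beta> v. v \<in> Jgr \<beta> \<longrightarrow> D v \<in> Jgr \<beta>}"

definition res :: "('z::zero jck \<Rightarrow> 'z jck) \<Rightarrow> ('z jck \<Rightarrow> 'z jck)" where
  "res D = (\<lambda>v. if v \<in> Kset then D v else 0)"

definition zel :: "'z::zero \<Rightarrow> 'z jck" where "zel f = single One f"
definition xel :: "'z::{zero,one} jck" where "xel = single X 1"

definition is_eta :: "('f \<Rightarrow> 'z \<Rightarrow> 'z) \<Rightarrow> ('z::comm_ring_1 \<Rightarrow> 'z) \<Rightarrow> 'z
    \<Rightarrow> ('z jck \<Rightarrow> 'z jck) \<Rightarrow> bool" where
  "is_eta sc d a e \<longleftrightarrow> is_sder sc d Kset True e \<and> (\<forall>f. e (zel f) = 0) \<and> e xel = zel a"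

definition Derbar :: "('f \<Rightarrow> 'z \<Rightarrow> 'z) \<Rightarrow> ('z::comm_ring_1 \<Rightarrow> 'z) \<Rightarrow> ('z jck \<Rightarrow> 'z jck) set" where
  "Derbar sc d = {d0 + e | d0 e. is_sder sc d Kset False d0 \<and> (\<exists>a. is_eta sc d a e)}"

definition is_basis_of :: "('f::field \<Rightarrow> 'b::ab_group_add \<Rightarrow> 'b) \<Rightarrow> 'b set \<Rightarrow> 'b set \<Rightarrow> bool" where
  "is_basis_of s V B \<longleftrightarrow> B \<subseteq> V \<and> \<not> module.dependent s B \<and> module.span s B = V"

end

theory Submission
  imports Defs
begin

(* Everything rests on one explicit family of odd derivations: for a1, a2, a3, b in Z the map
   odd_der a1 a2 a3 b is an odd derivation of J, and it is a combination of inner derivations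
   D(w_i, a x) and D(w_1, b x_1).  The key rigidity fact is that an odd derivation vanishing on
   w_1, w_2, w_3 vanishes identically; this is where Z delta(Z) = Z is used.  Comparing an
   arbitrary odd derivation D with odd_der built from the coordinates of D(w_i) therefore shows
   that a x + a_1 x_1 + a_2 x_2 + a_3 x_3 \<mapsto> odd_der a_1 a_2 a_3 a is a linear bijection
   from J_1 onto Der(J)_1.  From this:
   (i)   every odd derivation is inner, and conversely the odd part of any D(a,b) is an odd
         derivation, so the odd elements of Inder(J) are derivations;
   (ii)  a Z_2^2-graded derivation has odd part odd_der 0 0 0 b and is determined by its values
         on K; every even derivation of K extends by an explicit formula (even_der);
   (iii) an F-basis BZ of Z gives the basis {z e | e in {x, x_1, x_2, x_3}, z in BZ} of J_1,
         whose image under the bijection is a basis of Der(J)_1; both are equipollent to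
         4 x BZ. *)

definition jvec :: "'z \<Rightarrow> 'z \<Rightarrow> 'z \<Rightarrow> 'z \<Rightarrow> 'z \<Rightarrow> 'z \<Rightarrow> 'z \<Rightarrow> 'z \<Rightarrow> 'z jck" where
  "jvec a0 a1 a2 a3 ax y1 y2 y3 = (\<lambda>k. case k of One \<Rightarrow> a0
     | W i \<Rightarrow> (case i of I1 \<Rightarrow> a1 | I2 \<Rightarrow> a2 | I3 \<Rightarrow> a3)
     | X \<Rightarrow> ax | Xi i \<Rightarrow> (case i of I1 \<Rightarrow> y1 | I2 \<Rightarrow> y2 | I3 \<Rightarrow> y3))"

lemma jvec_apply [simp]:
  "jvec a0 a1 a2 a3 ax y1 y2 y3 One = a0"
  "jvec a0 a1 a2 a3 ax y1 y2 y3 (W I1) = a1"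
  "jvec a0 a1 a2 a3 ax y1 y2 y3 (W I2) = a2"
  "jvec a0 a1 a2 a3 ax y1 y2 y3 (W I3) = a3"
  "jvec a0 a1 a2 a3 ax y1 y2 y3 X = ax"
  "jvec a0 a1 a2 a3 ax y1 y2 y3 (Xi I1) = y1"
  "jvec a0 a1 a2 a3 ax y1 y2 y3 (Xi I2) = y2"
  "jvec a0 a1 a2 a3 ax y1 y2 y3 (Xi I3) = y3"
  by (simp_all add: jvec_def)

lemma cb_all: "(\<forall>e. P e) \<longleftrightarrow>
  P One \<and> P (W I1) \<and> P (W I2) \<and> P (W I3) \<and> P X \<and> P (Xi I1) \<and> P (Xi I2) \<and> P (Xi I3)"
proof (intro iffI allI)
  fix e assume h: "P One \<and> P (W I1) \<and> P (W I2) \<and> P (W I3) \<and> P X \<and> P (Xi I1) \<and> P (Xi I2) \<and> P (Xi I3)"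
  show "P e"
  proof (cases e)
    case (W i) then show ?thesis using h by (cases i) auto
  next
    case (Xi i) then show ?thesis using h by (cases i) auto
  qed (use h in auto)
qed simp

lemma jck_eq_iff: "u = v \<longleftrightarrow> u One = v One \<and> u (W I1) = v (W I1) \<and> u (W I2) = v (W I2)
   \<and> u (W I3) = v (W I3) \<and> u X = v X \<and> u (Xi I1) = v (Xi I1) \<and> u (Xi I2) = v (Xi I2)
   \<and> u (Xi I3) = v (Xi I3)"
  using cb_all[of "\<lambda>k. u k = v k"] by (simp add: fun_eq_iff)

lemma cbs_sum: "(\<Sum>e\<in>cbs. f e) =
  f One + f (W I1) + f (W I2) + f (W I3) + f X + f (Xi I1) + f (Xi I2) + f (Xi I3)"
  by (simp add: cbs_def add.assoc)

lemma jmult_explicit: "jmult d u v = jvec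
   (u One * v One + u (W I1) * v (W I1) + u (W I2) * v (W I2) - u (W I3) * v (W I3)
      + (d (u X) * v X - u X * d (v X)))
   (u One * v (W I1) + u (W I1) * v One - u X * v (Xi I1) + u (Xi I1) * v X)
   (u One * v (W I2) + u (W I2) * v One - u X * v (Xi I2) + u (Xi I2) * v X)
   (u One * v (W I3) + u (W I3) * v One - u X * v (Xi I3) + u (Xi I3) * v X)
   (u One * v X + u X * v One)
   (u One * v (Xi I1) + u (Xi I1) * v One + d (u (W I1)) * v X + u X * d (v (W I1))
      - u (W I3) * v (Xi I2) + u (W I2) * v (Xi I3) - u (Xi I2) * v (W I3) + u (Xi I3) * v (W I2))
   (u One * v (Xi I2) + u (Xi I2) * v One + d (u (W I2)) * v X + u X * d (v (W I2))
      - u (W I1) * v (Xi I3) + u (W I3) * v (Xi I1) - u (Xi I3) * v (W I1) + u (Xi I1) * v (W I3))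
   (u One * v (Xi I3) + u (Xi I3) * v One + d (u (W I3)) * v X + u X * d (v (W I3))
      - u (W I1) * v (Xi I2) + u (W I2) * v (Xi I1) - u (Xi I2) * v (W I1) + u (Xi I1) * v (W I2))"
  unfolding jck_eq_iff by (simp add: jmult_def cbs_sum single_def algebra_simps)

lemma Jpar_False: "a \<in> Jpar False \<longleftrightarrow> a X = 0 \<and> a (Xi I1) = 0 \<and> a (Xi I2) = 0 \<and> a (Xi I3) = 0"
  unfolding Jpar_def by (simp add: cb_all)

lemma Jpar_True: "a \<in> Jpar True \<longleftrightarrow> a One = 0 \<and> a (W I1) = 0 \<and> a (W I2) = 0 \<and> a (W I3) = 0"
  unfolding Jpar_def by (simp add: cb_all)

lemma Jpar_add: "(u::'z::comm_ring_1 jck) \<in> Jpar q \<Longrightarrow> v \<in> Jpar q \<Longrightarrow> u + v \<in> Jpar q"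
  and Jpar_diff: "(u::'z::comm_ring_1 jck) \<in> Jpar q \<Longrightarrow> v \<in> Jpar q \<Longrightarrow> u - v \<in> Jpar q"
  and Jpar_neg: "(u::'z::comm_ring_1 jck) \<in> Jpar q \<Longrightarrow> - u \<in> Jpar q"
  and Jpar_zero [simp]: "0 \<in> Jpar q"
  by (simp_all add: Jpar_def)

definition wel :: "idx \<Rightarrow> 'z::{zero,one} jck" where "wel i = single (W i) 1"
definition yel :: "idx \<Rightarrow> 'z::{zero,one} jck" where "yel i = single (Xi i) 1"

lemmas gen_defs = wel_def yel_def xel_def zel_def single_def
lemmas jcomp = jmult_explicit gen_defs jck_eq_iff

lemma single_zero [simp]: "single e 0 = 0"
  by (simp add: single_def fun_eq_iff)

lemma gen_par [simp]:
  "wel i \<in> Jpar False" "yel i \<in> Jpar True" "xel \<in> Jpar True" "zel f \<in> Jpar False"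
  "single (W i) f \<in> Jpar False" "single (Xi i) f \<in> Jpar True" "single X f \<in> Jpar True"
  by (cases i; simp add: Jpar_True Jpar_False gen_defs)+

definition par0 :: "'z::comm_ring_1 jck \<Rightarrow> 'z jck" where
  "par0 v = jvec (v One) (v (W I1)) (v (W I2)) (v (W I3)) 0 0 0 0"
definition par1 :: "'z::comm_ring_1 jck \<Rightarrow> 'z jck" where
  "par1 v = jvec 0 0 0 0 (v X) (v (Xi I1)) (v (Xi I2)) (v (Xi I3))"

lemma par_in [simp]: "par0 v \<in> Jpar False" "par1 v \<in> Jpar True"
  by (simp_all add: par0_def par1_def Jpar_True Jpar_False)

lemma par_split: "(v::'z::comm_ring_1 jck) = par0 v + par1 v"
  by (simp add: par0_def par1_def jck_eq_iff)

lemma par_id: "w \<in> Jpar True \<Longrightarrow> par1 w = w" "w \<in> Jpar False \<Longrightarrow> par0 w = w"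
  "w \<in> Jpar True \<Longrightarrow> par0 w = 0" "w \<in> Jpar False \<Longrightarrow> par1 w = 0"
  by (simp_all add: par0_def par1_def Jpar_True Jpar_False jck_eq_iff)

lemma par_add: "par0 (u + v) = par0 u + par0 (v::'z::comm_ring_1 jck)"
  "par1 (u + v) = par1 u + par1 (v::'z::comm_ring_1 jck)"
  by (simp_all add: par0_def par1_def jck_eq_iff)

definition oddpart :: "('z::comm_ring_1 jck \<Rightarrow> 'z jck) \<Rightarrow> ('z jck \<Rightarrow> 'z jck)" where
  "oddpart D = (\<lambda>v. par1 (D (par0 v)) + par0 (D (par1 v)))"

lemma oddpart_id:
  assumes add: "\<And>u v. D (u + v) = D u + D v" and od: "odd_map (D :: 'z::comm_ring_1 jck \<Rightarrow> _)"
  shows "oddpart D = D"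
proof (rule ext)
  fix v
  have "D v = D (par0 v) + D (par1 v)" using add par_split by metis
  moreover have "D (par0 v) \<in> Jpar True" "D (par1 v) \<in> Jpar False"
    using od unfolding odd_map_def by (metis par_in(1), metis par_in(2))
  ultimately show "oddpart D v = D v" by (simp add: oddpart_def par_id add.commute)
qed

text \<open>The explicit odd derivations: D = odd_der a1 a2 a3 b has D(w_i)(x) = a_i and
  D(w_1)(x_1) = b; these maps exhaust Der(J)_1 (odd_der_structure).\<close>
definition odd_der :: "('z::comm_ring_1 \<Rightarrow> 'z) \<Rightarrow> 'z \<Rightarrow> 'z \<Rightarrow> 'z \<Rightarrow> 'z \<Rightarrow> 'z jck \<Rightarrow> 'z jck" where
  "odd_der d a1 a2 a3 b v = jvec (- b * v X + a1 * v (Xi I1) + a2 * v (Xi I2) + a3 * v (Xi I3))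
     (a1 * d (v X) - d a1 * v X - a3 * v (Xi I2) - a2 * v (Xi I3))
     (a2 * d (v X) - d a2 * v X + a3 * v (Xi I1) + a1 * v (Xi I3))
     (- a3 * d (v X) + d a3 * v X - a2 * v (Xi I1) + a1 * v (Xi I2))
     (a1 * v (W I1) + a2 * v (W I2) + a3 * v (W I3))
     (a1 * d (v One) + b * v (W I1) - a2 * d (v (W I3)) - a3 * d (v (W I2)))
     (a2 * d (v One) + b * v (W I2) + a3 * d (v (W I1)) + a1 * d (v (W I3)))
     (- a3 * d (v One) + b * v (W I3) - a2 * d (v (W I1)) + a1 * d (v (W I2)))"

text \<open>It is a derivation exactly when phi is a
  derivation of Z with phi delta = delta phi + 2 q delta (see even_der_sder).\<close>
definition even_der :: "('z::comm_ring_1 \<Rightarrow> 'z) \<Rightarrow> 'z \<Rightarrow> 'z jck \<Rightarrow> 'z jck" where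
  "even_der \<phi> q v = jvec (\<phi> (v One)) (\<phi> (v (W I1))) (\<phi> (v (W I2))) (\<phi> (v (W I3)))
     (\<phi> (v X) + q * v X) (\<phi> (v (Xi I1)) - q * v (Xi I1)) (\<phi> (v (Xi I2)) - q * v (Xi I2))
     (\<phi> (v (Xi I3)) - q * v (Xi I3))"

lemma Jgr_iff: "v \<in> Jgr \<beta> \<longleftrightarrow> (\<forall>k. gr k \<noteq> \<beta> \<longrightarrow> v k = 0)"
  by (simp add: Jgr_def)

lemma Jgr_add: "u \<in> Jgr \<beta> \<Longrightarrow> v \<in> Jgr \<beta> \<Longrightarrow> (u::'z::comm_ring_1 jck) + v \<in> Jgr \<beta>"
  and Jgr_diff: "u \<in> Jgr \<beta> \<Longrightarrow> v \<in> Jgr \<beta> \<Longrightarrow> (u::'z::comm_ring_1 jck) - v \<in> Jgr \<beta>"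
  by (simp_all add: Jgr_iff)

lemma Jgr_par: "v \<in> Jgr \<beta> \<Longrightarrow> par0 v \<in> Jgr \<beta>" "v \<in> Jgr \<beta> \<Longrightarrow> par1 v \<in> Jgr \<beta>"
  unfolding Jgr_iff par0_def par1_def by (simp_all add: cb_all)

lemma Kset_iff: "v \<in> Kset \<longleftrightarrow> v (W I1) = 0 \<and> v (W I2) = 0 \<and> v (W I3) = 0 \<and> v (Xi I1) = 0
    \<and> v (Xi I2) = 0 \<and> v (Xi I3) = 0"
  unfolding Kset_def by (simp add: cb_all)

lemma Kset_Jgr: "Kset = Jgr (False, False)"
  unfolding Kset_def Jgr_def by (simp add: cb_all)

lemma gen_K [simp]: "zel f \<in> Kset" "xel \<in> Kset" "single X f \<in> Kset"
  by (simp_all add: Kset_iff gen_defs)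

lemma K_decomp: "(v::'z::comm_ring_1 jck) \<in> Kset \<Longrightarrow> v = zel (v One) + single X (v X)"
  by (simp add: Kset_iff gen_defs jck_eq_iff)

lemma gen_gr: "wel i \<in> Jgr (gr (W i))" "yel i \<in> Jgr (gr (Xi i))"
  by (cases i; simp add: Jgr_iff cb_all gen_defs)+

text \<open>The standing hypotheses of the theorem: Z is an F-algebra via sc, delta is an
  F-linear derivation of Z with Z delta(Z) = Z, and char F \<noteq> 2.\<close>

locale cheng_kac =
  fixes sc :: "'f::field \<Rightarrow> 'z::comm_ring_1 \<Rightarrow> 'z" and \<delta> :: "'z \<Rightarrow> 'z"
  assumes two: "(2::'f) \<noteq> 0"
    and vs: "vector_space sc"
    and scm: "\<forall>c u v. sc c (u * v) = sc c u * v"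
    and dadd: "\<forall>u v. \<delta> (u + v) = \<delta> u + \<delta> v"
    and dsc: "\<forall>c u. \<delta> (sc c u) = sc c (\<delta> u)"
    and dmul: "\<forall>u v. \<delta> (u * v) = \<delta> u * v + u * \<delta> v"
    and spn: "module.span sc {f * \<delta> g | f g. True} = UNIV"
begin

sublocale Z: vector_space sc by (rule vs)

lemma d_add [simp]: "\<delta> (u + v) = \<delta> u + \<delta> v" using dadd by blast
lemma d_mult [simp]: "\<delta> (u * v) = \<delta> u * v + u * \<delta> v" using dmul by blast
lemma d_sc [simp]: "\<delta> (sc c u) = sc c (\<delta> u)" using dsc by blast
lemma d_0 [simp]: "\<delta> 0 = 0" using d_add[of 0 0] by simp
lemma d_minus [simp]: "\<delta> (- u) = - \<delta> u" using d_add[of u "- u"] by (simp add: minus_unique)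
lemma d_diff [simp]: "\<delta> (u - v) = \<delta> u - \<delta> v" using d_add[of u "- v"] by simp
lemma d_1 [simp]: "\<delta> 1 = 0" using d_mult[of 1 1] by simp

lemma sc_mult1 [simp]: "sc c (u * v) = sc c u * v" using scm by blast
lemma sc_mult2: "sc c (u * v) = u * sc c v" using scm by (metis mult.commute)

text \<open>The F-action on Z is multiplication by the scalars sc c 1; rewriting to this form
  lets ring normalisation handle all F-linearity goals.\<close>
lemma sc_as_mult: "NO_MATCH 1 u \<Longrightarrow> sc c u = sc c 1 * u"
  using sc_mult1[of c 1 u] by simp

lemma sJ_apply [simp]: "sJ sc c v k = sc c (v k)" by (simp add: sJ_def)

lemma annihilator_zero:
  assumes "\<And>f g. y * (f * \<delta> g) = 0"
  shows "y = 0"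
proof -
  have "(1::'z) \<in> Z.span {f * \<delta> g | f g. True}" using spn by simp
  then have "y * 1 = 0"
  proof (induction rule: Z.span_induct_alt)
    case (step c x z)
    then obtain f g where "x = f * \<delta> g" by blast
    then have "y * sc c x = 0" using assms by (metis sc_mult2 Z.scale_zero_right)
    then show ?case using step by (simp add: distrib_left)
  qed simp
  then show ?thesis by simp
qed

lemma two_cancel:
  assumes "2 * (z::'z) = 0"
  shows "z = 0"
proof -
  have "sc 2 z = z + z"
    using Z.scale_left_distrib[of 1 1 z] by (simp only: one_add_one Z.scale_one)
  then have "sc (inverse 2) (sc 2 z) = 0" using assms by (simp only: mult_2 Z.scale_zero_right)
  then show ?thesis by (simp add: two)
qed

lemma jck_decomp: "v = zel (v One) + jmult \<delta> (zel (v (W I1))) (wel I1)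
  + jmult \<delta> (zel (v (W I2))) (wel I2) + jmult \<delta> (zel (v (W I3))) (wel I3)
  + jmult \<delta> (zel (v X)) xel + jmult \<delta> (zel (v (Xi I1))) (yel I1)
  + jmult \<delta> (zel (v (Xi I2))) (yel I2) + jmult \<delta> (zel (v (Xi I3))) (yel I3)"
  by (simp add: jcomp)

lemma vs_sJ: "vector_space (sJ sc)"
  by unfold_locales (simp_all add: fun_eq_iff Z.scale_right_distrib Z.scale_left_distrib)
lemma vs_sE: "vector_space (sE sc)"
  by unfold_locales (simp_all add: fun_eq_iff sE_def Z.scale_right_distrib Z.scale_left_distrib)

sublocale J: vector_space "sJ sc" by (rule vs_sJ)
sublocale E: vector_space "sE sc" by (rule vs_sE)

lemma sJ_add: "sJ sc c (u + v) = sJ sc c u + sJ sc c v"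
  by (simp add: fun_eq_iff Z.scale_right_distrib)
lemma sJ_neg: "sJ sc c (- u) = - sJ sc c u"
  by (simp add: fun_eq_iff)
lemma sJ_comm: "sJ sc c (sJ sc c' u) = sJ sc c' (sJ sc c u)"
  by (simp add: fun_eq_iff mult.commute)

lemma Jpar_sJ: "u \<in> Jpar q \<Longrightarrow> sJ sc c u \<in> Jpar q" by (simp add: Jpar_def)

lemma jmult_add1: "jmult \<delta> (u + u') v = jmult \<delta> u v + jmult \<delta> u' v"
  and jmult_add2: "jmult \<delta> u (v + v') = jmult \<delta> u v + jmult \<delta> u v'"
  and jmult_diff1: "jmult \<delta> (u - u') v = jmult \<delta> u v - jmult \<delta> u' v"
  and jmult_diff2: "jmult \<delta> u (v - v') = jmult \<delta> u v - jmult \<delta> u v'"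
  and jmult_minus1: "jmult \<delta> (- u) v = - jmult \<delta> u v"
  and jmult_minus2: "jmult \<delta> u (- v) = - jmult \<delta> u v"
  by (simp_all add: jmult_explicit jck_eq_iff algebra_simps)

lemma jmult_zero1 [simp]: "jmult \<delta> 0 v = 0"
  and jmult_zero2 [simp]: "jmult \<delta> u 0 = 0"
  by (simp_all add: jmult_explicit jck_eq_iff)

lemma jmult_par: "u \<in> Jpar q1 \<Longrightarrow> v \<in> Jpar q2 \<Longrightarrow> jmult \<delta> u v \<in> Jpar (q1 \<noteq> q2)"
  by (cases q1; cases q2; simp add: Jpar_True Jpar_False jmult_explicit)

lemma jmult_sJ1: "jmult \<delta> (sJ sc c u) v = sJ sc c (jmult \<delta> u v)"
  and jmult_sJ2: "jmult \<delta> u (sJ sc c v) = sJ sc c (jmult \<delta> u v)"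
  by (simp_all add: jmult_explicit jck_eq_iff sc_as_mult algebra_simps del: sc_mult1)

lemma par_sJ: "par0 (sJ sc c u) = sJ sc c (par0 u)" "par1 (sJ sc c u) = sJ sc c (par1 u)"
  by (simp_all add: par0_def par1_def jck_eq_iff)

lemma odd_der_inner: "odd_der \<delta> a1 a2 a3 b =
     Dop \<delta> False (wel I1) True (single X (- a1)) + Dop \<delta> False (wel I2) True (single X (- a2))
   + Dop \<delta> False (wel I3) True (single X a3) + Dop \<delta> False (wel I1) True (single (Xi I1) (- b))"
  by (rule ext) (simp add: Dop_def jcomp odd_der_def)

lemma Dop_even_odd: "u \<in> Jpar False \<Longrightarrow> v \<in> Jpar True \<Longrightarrow>
  Dop \<delta> False u True v = odd_der \<delta> (Dop \<delta> False u True v (wel I1) X) (Dop \<delta> False u True v (wel I2) X)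
     (Dop \<delta> False u True v (wel I3) X) (Dop \<delta> False u True v (wel I1) (Xi I1))"
  by (rule ext) (simp add: Jpar_True Jpar_False Dop_def jcomp odd_der_def, simp add: algebra_simps)

lemma Dop_add: "Dop \<delta> qa a qb b (u + v) = Dop \<delta> qa a qb b u + Dop \<delta> qa a qb b v"
  by (simp add: Dop_def jmult_add2 algebra_simps)

text \<open>When a and b have equal parity, D(a,b) is even, so its odd component vanishes.\<close>
lemma oddpart_Dop_even:
  assumes "a \<in> Jpar q" "b \<in> Jpar q"
  shows "oddpart (Dop \<delta> q a q b) = 0"
proof -
  have even: "Dop \<delta> q a q b v \<in> Jpar r" if "v \<in> Jpar r" for v r
  proof -
    have r: "(q \<noteq> (q \<noteq> r)) = r" by auto
    have "jmult \<delta> a (jmult \<delta> b v) \<in> Jpar r" "jmult \<delta> b (jmult \<delta> a v) \<in> Jpar r"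
      using jmult_par[OF assms(1) jmult_par[OF assms(2) that]]
        jmult_par[OF assms(2) jmult_par[OF assms(1) that]] unfolding r by simp_all
    then show ?thesis unfolding Dop_def by (simp add: Jpar_diff Jpar_neg)
  qed
  show ?thesis
    using even[OF par_in(1)] even[OF par_in(2)] by (simp add: oddpart_def fun_eq_iff par_id)
qed

context
  fixes p and D :: "'z jck \<Rightarrow> 'z jck"
  assumes D: "is_sder sc \<delta> UNIV p D"
begin

lemma sder_add: "D (u + v) = D u + D v"
  and sder_sJ: "D (sJ sc c v) = sJ sc c (D v)"
  and sder_par: "v \<in> Jpar q \<Longrightarrow> D v \<in> Jpar (q \<noteq> p)"
  and sder_leib: "a \<in> Jpar q \<Longrightarrow>
     D (jmult \<delta> a b) = jmult \<delta> (D a) b + (if p \<and> q then - jmult \<delta> a (D b) else jmult \<delta> a (D b))"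
  using D unfolding is_sder_def by blast+

lemma sder_leib_even: "a \<in> Jpar False \<Longrightarrow> D (jmult \<delta> a b) = jmult \<delta> (D a) b + jmult \<delta> a (D b)"
  using sder_leib[of a False b] by simp

lemma sder_zero_arg: "D 0 = 0"
  using sder_add[of 0 0] by simp

lemma sder_neg: "D (- v) = - D v"
  using sder_add[of v "- v"] sder_zero_arg by (simp add: minus_unique)

text \<open>A derivation is determined by its values on Z1, w_i, x, x_i: these generate J as a
  Z-module, and a derivation vanishing on Z1 is Z-linear.\<close>
lemma sder_vanishing_on_generators:
  assumes z: "\<And>f. D (zel f) = 0" and w: "\<And>i. D (wel i) = 0" and x: "D xel = 0"
    and y: "\<And>i. D (yel i) = 0"
  shows "D = 0"
proof (rule ext)
  fix v
  have Zlin: "D (jmult \<delta> (zel f) g) = 0" if "D g = 0" for f g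
    using sder_leib_even[of "zel f" g] z that by simp
  show "D v = 0 v"
    by (subst jck_decomp[of v]) (simp only: sder_add z Zlin w x y, simp)
qed

end

lemma sder_plus: "is_sder sc \<delta> UNIV p D \<Longrightarrow> is_sder sc \<delta> UNIV p D' \<Longrightarrow> is_sder sc \<delta> UNIV p (D + D')"
  unfolding is_sder_def by (auto simp: jmult_add1 jmult_add2 sJ_add Jpar_add algebra_simps)

lemma sder_diff: "is_sder sc \<delta> UNIV p D \<Longrightarrow> is_sder sc \<delta> UNIV p D' \<Longrightarrow> is_sder sc \<delta> UNIV p (D - D')"
  unfolding is_sder_def
  by (auto simp: jmult_diff1 jmult_diff2 sJ_add sJ_neg Jpar_diff algebra_simps)

lemma sder_uminus: "is_sder sc \<delta> UNIV p D \<Longrightarrow> is_sder sc \<delta> UNIV p (- D)"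
  unfolding is_sder_def by (auto simp: jmult_minus1 jmult_minus2 sJ_neg Jpar_neg algebra_simps)

lemma sder_sE: "is_sder sc \<delta> UNIV p D \<Longrightarrow> is_sder sc \<delta> UNIV p (sE sc c D)"
  unfolding is_sder_def sE_def
  by (auto simp: jmult_sJ1 jmult_sJ2 sJ_add sJ_neg Jpar_sJ sJ_comm simp del: sJ_apply)

lemma sder_zero: "is_sder sc \<delta> UNIV p 0"
  unfolding is_sder_def by (simp add: fun_eq_iff)

section \<open>The odd derivations\<close>

lemma odd_der_sder: "is_sder sc \<delta> UNIV True (odd_der \<delta> a1 a2 a3 b)"
proof -
  let ?D = "odd_der \<delta> a1 a2 a3 b"
  have leib: "?D (jmult \<delta> a c) = jmult \<delta> (?D a) c +
      (if True \<and> q then - jmult \<delta> a (?D c) else jmult \<delta> a (?D c))" if "a \<in> Jpar q" for a c q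
    using that
    by (cases q) (simp_all add: Jpar_True Jpar_False jmult_explicit odd_der_def jck_eq_iff,
        simp_all add: algebra_simps)
  have par: "?D v \<in> Jpar (\<not> q)" if "v \<in> Jpar q" for v q
    using that by (cases q) (simp_all add: Jpar_True Jpar_False odd_der_def)
  have add: "?D (u + v) = ?D u + ?D v" for u v
    by (simp add: odd_der_def jck_eq_iff algebra_simps)
  have scale: "?D (sJ sc c v) = sJ sc c (?D v)" for c v
    by (simp add: odd_der_def jck_eq_iff del: sc_mult1) (simp add: sc_as_mult algebra_simps del: sc_mult1)
  show ?thesis unfolding is_sder_def using leib par add scale by simp
qed

text \<open>Rigidity, first step: an odd derivation vanishing on the w_i also vanishes on x and
  the x_i: from w_i x = delta(1) x_i = 0 and w_i x_j = +-x_k, the values D(x), D(x_i) lie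
  in the part of J_0 annihilated by all w_i, which is 0.\<close>
lemma odd_rigid_x_y:
  assumes D: "is_sder sc \<delta> UNIV True D" and w: "\<And>i. D (wel i) = 0"
  shows "D xel = 0" and "D (yel i) = 0"
proof -
  note L = sder_leib_even[OF D] and D0 = sder_zero_arg[OF D]
  have annihil: "jmult \<delta> (wel i) (D xel) = 0" for i
  proof -
    have "jmult \<delta> (wel i) xel = 0" by (cases i) (simp_all add: jcomp)
    then show ?thesis using L[of "wel i" xel] w D0 by simp
  qed
  have "D xel \<in> Jpar False" using sder_par[OF D, of xel True] by simp
  then show "D xel = 0"
    using annihil[of I1] annihil[of I2] annihil[of I3] by (simp add: jcomp Jpar_False)
  have move: "D (jmult \<delta> (wel i) (yel j)) = jmult \<delta> (wel i) (D (yel j))" for i j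
    using L[of "wel i" "yel j"] w by simp
  have products: "jmult \<delta> (wel I2) (yel I3) = yel I1" "jmult \<delta> (wel I3) (yel I2) = - yel I1"
    "jmult \<delta> (wel I3) (yel I1) = yel I2" "jmult \<delta> (wel I1) (yel I3) = - yel I2"
    "jmult \<delta> (wel I2) (yel I1) = yel I3" "jmult \<delta> (wel I1) (yel I2) = - yel I3"
    "jmult \<delta> (wel j) (yel j) = 0" for j
    by (cases j; simp add: jcomp)+
  have "D (yel j) \<in> Jpar False" for j using sder_par[OF D, of "yel j" True] by simp
  then have "D (yel I1) = 0 \<and> D (yel I2) = 0 \<and> D (yel I3) = 0"
    using move[of I2 I3] move[of I3 I2] move[of I3 I1] move[of I1 I3] move[of I2 I1]
      move[of I1 I2] move[of I1 I1] move[of I2 I2] move[of I3 I3]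
    unfolding products sder_neg[OF D] D0 by (simp add: jcomp Jpar_False)
  then show "D (yel i) = 0" by (cases i) auto
qed

text \<open>Rigidity, second step: an odd derivation vanishing on the w_i is Z-linear along the
  products f w_i, f x_i, f x and f w_i x = delta(f) x_i, so it is controlled by its values
  on Z1.\<close>
lemma odd_rigid_transport:
  assumes D: "is_sder sc \<delta> UNIV True D" and w: "\<And>i. D (wel i) = 0"
  shows "D (single (W i) f) = jmult \<delta> (D (zel f)) (wel i)"
    and "D (single (Xi i) (\<delta> f)) = jmult \<delta> (D (single (W i) f)) xel"
    and "D (single (Xi i) f) = jmult \<delta> (D (zel f)) (yel i)"
    and "D (single X f) = jmult \<delta> (D (zel f)) xel"
proof -
  note L = sder_leib_even[OF D]
  have x: "D xel = 0" and y: "\<And>i. D (yel i) = 0" using odd_rigid_x_y[OF D w] by auto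
  have "jmult \<delta> (zel f) (wel i) = single (W i) f" by (cases i; simp add: jcomp)
  then show "D (single (W i) f) = jmult \<delta> (D (zel f)) (wel i)" using L[of "zel f" "wel i"] w by simp
  have "jmult \<delta> (single (W i) f) xel = single (Xi i) (\<delta> f)" by (cases i; simp add: jcomp)
  then show "D (single (Xi i) (\<delta> f)) = jmult \<delta> (D (single (W i) f)) xel"
    using L[of "single (W i) f" xel] x by simp
  have "jmult \<delta> (zel f) (yel i) = single (Xi i) f" by (cases i; simp add: jcomp)
  then show "D (single (Xi i) f) = jmult \<delta> (D (zel f)) (yel i)" using L[of "zel f" "yel i"] y by simp
  have "jmult \<delta> (zel f) xel = single X f" by (simp add: jcomp)
  then show "D (single X f) = jmult \<delta> (D (zel f)) xel" using L[of "zel f" xel] x by simp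
qed

text \<open>Comparing the two expressions for D(delta(f) x_i) shows that D maps Z1 into Zx.\<close>
lemma odd_rigid_Z_shape:
  assumes D: "is_sder sc \<delta> UNIV True D" and w: "\<And>i. D (wel i) = 0"
  shows "D (zel f) = single X (D (zel f) X)"
proof -
  note T = odd_rigid_transport[OF D w]
  have odd: "D (zel g) \<in> Jpar True" for g using sder_par[OF D, of "zel g" False] by simp
  have "jmult \<delta> (D (zel (\<delta> f))) (yel i) = jmult \<delta> (jmult \<delta> (D (zel f)) (wel i)) xel" for i
    using T(1)[of i f] T(2)[of i f] T(3)[of i "\<delta> f"] by simp
  from this[of I1] this[of I2] this[of I3] odd[of f] odd[of "\<delta> f"] show ?thesis
    by (simp add: jcomp Jpar_True)
qed

text \<open>Rigidity, third step: writing D(f1) = alpha(f) x, the Leibniz rule makes alpha a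
  derivation with -alpha(delta(f) g) = f delta(alpha(g)); hence alpha is killed by delta(Z),
  so alpha = 0 because Z delta(Z) = Z.\<close>
lemma odd_rigid_Z:
  assumes D: "is_sder sc \<delta> UNIV True D" and w: "\<And>i. D (wel i) = 0"
  shows "D (zel f) = 0"
proof -
  note L = sder_leib_even[OF D] and T = odd_rigid_transport[OF D w]
  define \<alpha> where "\<alpha> f = D (zel f) X" for f
  have shape: "D (zel f) = single X (\<alpha> f)" for f
    unfolding \<alpha>_def by (rule odd_rigid_Z_shape[OF D w])
  have \<alpha>_leib: "\<alpha> (f * g) = \<alpha> f * g + f * \<alpha> g" for f g
  proof -
    have "jmult \<delta> (zel f) (zel g) = zel (f * g)" by (simp add: jcomp)
    then have "D (zel (f * g)) = jmult \<delta> (D (zel f)) (zel g) + jmult \<delta> (zel f) (D (zel g))"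
      using L[of "zel f" "zel g"] by simp
    then show ?thesis unfolding shape by (simp add: jcomp algebra_simps)
  qed
  have \<alpha>_dw: "- \<alpha> (\<delta> f * g) = f * \<delta> (\<alpha> g)" for f g
  proof -
    have "jmult \<delta> (single (W I1) f) (single X g) = single (Xi I1) (\<delta> f * g)" by (simp add: jcomp)
    moreover have "D (jmult \<delta> (single (W I1) f) (single X g)) = jmult \<delta> (D (single (W I1) f)) (single X g)
      + jmult \<delta> (single (W I1) f) (D (single X g))"
      using L[of "single (W I1) f" "single X g"] by simp
    ultimately have "jmult \<delta> (D (zel (\<delta> f * g))) (yel I1) = jmult \<delta> (jmult \<delta> (D (zel f)) (wel I1)) (single X g)
      + jmult \<delta> (single (W I1) f) (jmult \<delta> (D (zel g)) xel)"
      using T(1,3,4) by metis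
    then show ?thesis unfolding shape by (simp add: jcomp)
  qed
  have "\<alpha> 0 = 0" using sder_zero_arg[OF D] by (simp add: \<alpha>_def zel_def)
  then have d\<alpha>: "\<delta> (\<alpha> g) = 0" for g using \<alpha>_dw[of 1 g] by simp
  have \<alpha>d: "\<alpha> (\<delta> f) = 0" for f using \<alpha>_dw[of f 1] d\<alpha> by simp
  have killed: "\<delta> h * \<alpha> g = 0" for h g
    using \<alpha>_dw[of h g] \<alpha>_leib[of "\<delta> h" g] \<alpha>d d\<alpha> by simp
  have "\<alpha> g = 0" for g
  proof (rule annihilator_zero)
    fix f h
    have "\<alpha> g * (f * \<delta> h) = f * (\<delta> h * \<alpha> g)" by (simp add: ac_simps)
    then show "\<alpha> g * (f * \<delta> h) = 0" using killed[of h g] by simp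
  qed
  then show ?thesis by (simp add: shape)
qed

lemma odd_rigid:
  assumes D: "is_sder sc \<delta> UNIV True D" and w: "\<And>i. D (wel i) = 0"
  shows "D = 0"
  using sder_vanishing_on_generators[OF D] odd_rigid_Z[OF D w] w odd_rigid_x_y[OF D w] by blast

text \<open>The remaining coordinates of D(w_i) are forced by
  w_i w_j = 0, and the difference then vanishes on the w_i.\<close>
lemma odd_der_structure:
  assumes D: "is_sder sc \<delta> UNIV True D"
  shows "D = odd_der \<delta> (D (wel I1) X) (D (wel I2) X) (D (wel I3) X) (D (wel I1) (Xi I1))"
    (is "D = ?E")
proof -
  have ortho: "0 = jmult \<delta> (D (wel i)) (wel j) + jmult \<delta> (wel i) (D (wel j))" if "i \<noteq> j" for i j
  proof -
    have "jmult \<delta> (wel i) (wel j) = 0" using that by (cases i; cases j; simp add: jcomp)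
    then show ?thesis using sder_leib_even[OF D, of "wel i" "wel j"] sder_zero_arg[OF D] by simp
  qed
  have "D (wel i) \<in> Jpar True" for i using sder_par[OF D, of "wel i" False] by simp
  then have "D (wel I1) = ?E (wel I1) \<and> D (wel I2) = ?E (wel I2) \<and> D (wel I3) = ?E (wel I3)"
    using ortho[of I1 I2] ortho[of I1 I3] ortho[of I2 I3] by (simp add: jcomp Jpar_True odd_der_def)
  then have "(D - ?E) (wel i) = 0" for i by (cases i) auto
  then have "D - ?E = 0" by (rule odd_rigid[OF sder_diff[OF D odd_der_sder]])
  then show ?thesis by simp
qed

section \<open>Part (i): odd derivations are inner\<close>

lemma Dop_odd_sder:
  assumes "a \<in> Jpar qa" "b \<in> Jpar qb" "qa \<noteq> qb"
  shows "is_sder sc \<delta> UNIV True (Dop \<delta> qa a qb b)"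
proof (cases qa)
  case True
  then have "Dop \<delta> qa a qb b = - Dop \<delta> False b True a" using assms by (simp add: Dop_def fun_eq_iff)
  then show ?thesis using assms True Dop_even_odd[of b a] odd_der_sder sder_uminus by (metis (full_types))
next
  case False
  then show ?thesis using assms Dop_even_odd[of a b] odd_der_sder by (metis (full_types))
qed

lemma oddpart_Dop_sder:
  assumes "a \<in> Jpar qa" "b \<in> Jpar qb"
  shows "is_sder sc \<delta> UNIV True (oddpart (Dop \<delta> qa a qb b))"
proof (cases "qa = qb")
  case True
  then show ?thesis using oddpart_Dop_even assms sder_zero by metis
next
  case False
  have S: "is_sder sc \<delta> UNIV True (Dop \<delta> qa a qb b)" using Dop_odd_sder assms False by blast
  have "odd_map (Dop \<delta> qa a qb b)" using sder_par[OF S] unfolding odd_map_def by simp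
  then show ?thesis using S oddpart_id Dop_add by metis
qed

lemma oddpart_lin: "oddpart (sE sc c D + D') = sE sc c (oddpart D) + oddpart D'"
  by (simp add: oddpart_def sE_def fun_eq_iff par_add par_sJ sJ_add algebra_simps)

lemma Inder_oddpart:
  assumes "S \<in> Inder sc \<delta>"
  shows "(\<forall>u v. S (u + v) = S u + S v) \<and> is_sder sc \<delta> UNIV True (oddpart S)"
  using assms unfolding Inder_def
proof (induction rule: E.span_induct_alt)
  case base
  have "oddpart 0 = (0 :: 'z jck \<Rightarrow> 'z jck)" by (simp add: oddpart_def fun_eq_iff par_id)
  then have "is_sder sc \<delta> UNIV True (oddpart 0)" by (simp add: sder_zero)
  then show ?case by (simp add: zero_fun_def)
next
  case (step c x y)
  then obtain qa a qb b where x: "x = Dop \<delta> qa a qb b" "a \<in> Jpar qa" "b \<in> Jpar qb" by blast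
  have y_add: "y (u + v) = y u + y v" for u v using step.IH by blast
  have "(sE sc c x + y) (u + v) = (sE sc c x + y) u + (sE sc c x + y) v" for u v
    using y_add[of u v] Dop_add[of qa a qb b u v]
    by (simp only: x(1) sE_def plus_fun_apply sJ_add) (simp add: algebra_simps)
  moreover have "is_sder sc \<delta> UNIV True (oddpart (sE sc c x + y))"
    unfolding oddpart_lin using step.IH oddpart_Dop_sder[OF x(2,3)] x(1)
    by (intro sder_plus sder_sE) auto
  ultimately show ?case by blast
qed

theorem odd_derivations_inner: "{D. is_sder sc \<delta> UNIV True D} = Inder sc \<delta> \<inter> {D. odd_map D}"
proof (intro equalityI subsetI)
  fix D assume "D \<in> {D. is_sder sc \<delta> UNIV True D}"
  then have D: "is_sder sc \<delta> UNIV True D" by simp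
  let ?G = "{Dop \<delta> qa a qb b | qa a qb b. a \<in> Jpar qa \<and> b \<in> Jpar qb}"
  have gen: "Dop \<delta> False (wel i) True (single e f) \<in> E.span ?G" if "single e f \<in> Jpar True" for i e f
    by (rule E.span_base) (use that gen_par(1)[of i] in blast)
  have "D \<in> E.span ?G"
    by (subst odd_der_structure[OF D], unfold odd_der_inner) (intro E.span_add gen; simp)
  moreover have "odd_map D" using sder_par[OF D] unfolding odd_map_def by simp
  ultimately show "D \<in> Inder sc \<delta> \<inter> {D. odd_map D}" by (simp add: Inder_def)
next
  fix S assume "S \<in> Inder sc \<delta> \<inter> {D. odd_map D}"
  then have S: "S \<in> Inder sc \<delta>" and odd: "odd_map S" by auto
  have add: "\<And>u v. S (u + v) = S u + S v" and der: "is_sder sc \<delta> UNIV True (oddpart S)"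
    using Inder_oddpart[OF S] by auto
  show "S \<in> {D. is_sder sc \<delta> UNIV True D}" using der oddpart_id[OF add odd] by simp
qed

section \<open>Part (ii): graded derivations and the derivations of K\<close>

lemma oddpart_of_sum:
  assumes S0: "is_sder sc \<delta> UNIV False D0" and S1: "is_sder sc \<delta> UNIV True D1"
  shows "oddpart (D0 + D1) = D1"
proof (rule ext)
  fix v
  have "D0 (par0 v) \<in> Jpar False" "D1 (par0 v) \<in> Jpar True"
    "D0 (par1 v) \<in> Jpar True" "D1 (par1 v) \<in> Jpar False"
    using sder_par[OF S0, of "par0 v" False] sder_par[OF S1, of "par0 v" False]
      sder_par[OF S0, of "par1 v" True] sder_par[OF S1, of "par1 v" True] by auto
  moreover have "D1 v = D1 (par0 v) + D1 (par1 v)" using sder_add[OF S1] par_split by metis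
  ultimately show "oddpart (D0 + D1) v = D1 v" by (simp add: oddpart_def par_add par_id)
qed

lemma Der00_split:
  assumes "D \<in> Der00 sc \<delta>"
  obtains D0 D1 where "D = D0 + D1" "is_sder sc \<delta> UNIV False D0" "is_sder sc \<delta> UNIV True D1"
    "\<And>\<beta> v. v \<in> Jgr \<beta> \<Longrightarrow> D0 v \<in> Jgr \<beta>" "\<And>\<beta> v. v \<in> Jgr \<beta> \<Longrightarrow> D1 v \<in> Jgr \<beta>"
proof -
  from assms obtain D0 D1 where D: "D = D0 + D1" and S0: "is_sder sc \<delta> UNIV False D0"
    and S1: "is_sder sc \<delta> UNIV True D1" and G: "\<And>\<beta> v. v \<in> Jgr \<beta> \<Longrightarrow> D v \<in> Jgr \<beta>"
    unfolding Der00_def Der_def by blast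
  have D1: "D1 = oddpart D" using oddpart_of_sum[OF S0 S1] D by simp
  have G1: "D1 v \<in> Jgr \<beta>" if "v \<in> Jgr \<beta>" for \<beta> v
    unfolding D1 oddpart_def using that by (intro Jgr_add Jgr_par G)
  have "D0 v \<in> Jgr \<beta>" if "v \<in> Jgr \<beta>" for \<beta> v
    using Jgr_diff[OF G[OF that] G1[OF that]] by (simp add: D)
  then show ?thesis using that D S0 S1 G1 by blast
qed

text \<open>A graded odd derivation has D(w_i)(x) = 0, so it is odd_der 0 0 0 b.\<close>
lemma odd_graded:
  assumes D: "is_sder sc \<delta> UNIV True D" and G: "\<And>\<beta> v. v \<in> Jgr \<beta> \<Longrightarrow> D v \<in> Jgr \<beta>"
  shows "D = odd_der \<delta> 0 0 0 (D (wel I1) (Xi I1))"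
proof -
  have "D (wel i) X = 0" for i
    using G[OF gen_gr(1)[of i]] by (cases i) (simp_all add: Jgr_iff)
  then show ?thesis using odd_der_structure[OF D] by simp
qed

lemma odd_der_graded: "v \<in> Jgr \<beta> \<Longrightarrow> odd_der \<delta> 0 0 0 b v \<in> Jgr \<beta>"
  by (cases \<beta>) (rename_tac s t, case_tac s; case_tac t; simp add: Jgr_iff cb_all odd_der_def)

lemma odd_der_on_K: "odd_der \<delta> 0 0 0 b xel = zel (- b)" "odd_der \<delta> 0 0 0 b (zel f) = 0"
  by (simp_all add: odd_der_def gen_defs jck_eq_iff)

text \<open>A graded even derivation vanishing on K vanishes: w_i^2 = +-1 forces
  2 D(w_i)(w_i) = 0 (here char F \<noteq> 2 is used), and x x_i = -w_i then forces D(x_i) = 0.\<close>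
lemma even_graded_rigid:
  assumes E: "is_sder sc \<delta> UNIV False E" and G: "\<And>\<beta> v. v \<in> Jgr \<beta> \<Longrightarrow> E v \<in> Jgr \<beta>"
    and z: "\<And>f. E (zel f) = 0" and x: "E xel = 0"
  shows "E = 0"
proof -
  have w: "E (wel i) = 0" for i
  proof -
    have g: "E (wel i) \<in> Jgr (gr (W i))" by (rule G[OF gen_gr(1)])
    have p: "E (wel i) \<in> Jpar False" using sder_par[OF E, of "wel i" False] by simp
    have "jmult \<delta> (wel i) (wel i) = zel (wsq i)" by (cases i; simp add: jcomp)
    then have e: "0 = jmult \<delta> (E (wel i)) (wel i) + jmult \<delta> (wel i) (E (wel i))"
      using sder_leib_even[OF E, of "wel i" "wel i"] z by simp
    then have "2 * E (wel i) (W i) = 0"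
      using g p by (cases i) (simp_all add: jcomp Jgr_iff Jpar_False)
    then show ?thesis using g p two_cancel by (cases i) (simp_all add: Jgr_iff Jpar_False jck_eq_iff)
  qed
  have y: "E (yel i) = 0" for i
  proof -
    have g: "E (yel i) \<in> Jgr (gr (Xi i))" by (rule G[OF gen_gr(2)])
    have p: "E (yel i) \<in> Jpar True" using sder_par[OF E, of "yel i" True] by simp
    have "jmult \<delta> xel (yel i) = - wel i" by (cases i; simp add: jcomp)
    then have "0 = jmult \<delta> xel (E (yel i))"
      using sder_leib[OF E, of xel True "yel i"] x w sder_neg[OF E] by simp
    then show ?thesis using g p by (cases i; simp add: jcomp Jgr_iff Jpar_True)
  qed
  show ?thesis by (rule sder_vanishing_on_generators[OF E]) (auto simp: z w x y)
qed

lemma even_der_sder: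
  assumes padd: "\<And>u v. \<phi> (u + v) = \<phi> u + \<phi> v" and psc: "\<And>c u. \<phi> (sc c u) = sc c (\<phi> u)"
    and pmul: "\<And>u v. \<phi> (u * v) = \<phi> u * v + u * \<phi> v"
    and pd: "\<And>u. \<phi> (\<delta> u) = \<delta> (\<phi> u) + 2 * q * \<delta> u"
  shows "is_sder sc \<delta> UNIV False (even_der \<phi> q)"
proof -
  have p0: "\<phi> 0 = 0" using padd[of 0 0] by simp
  have pm: "\<phi> (- u) = - \<phi> u" for u using padd[of u "- u"] p0 by (simp add: minus_unique)
  have pdf: "\<phi> (u - v) = \<phi> u - \<phi> v" for u v using padd[of u "- v"] pm by simp
  have p1: "\<phi> 1 = 0" using pmul[of 1 1] by simp
  have ps1: "\<phi> (sc c 1) = 0" for c using psc[of c 1] p1 by simp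
  note ps = padd pmul pd p0 pm pdf p1 ps1
  have "even_der \<phi> q (u + v) = even_der \<phi> q u + even_der \<phi> q v" for u v
    by (simp add: even_der_def jck_eq_iff ps algebra_simps)
  moreover have "even_der \<phi> q (sJ sc c v) = sJ sc c (even_der \<phi> q v)" for c v
    by (simp add: even_der_def jck_eq_iff del: sc_mult1) (simp add: sc_as_mult ps algebra_simps del: sc_mult1)
  moreover have "even_der \<phi> q v \<in> Jpar r" if "v \<in> Jpar r" for v r
    using that by (cases r) (simp_all add: Jpar_True Jpar_False even_der_def ps)
  moreover have "even_der \<phi> q (jmult \<delta> a c) = jmult \<delta> (even_der \<phi> q a) c + jmult \<delta> a (even_der \<phi> q c)"
    if "a \<in> Jpar r" for a c r
    using that by (cases r) (simp_all add: Jpar_True Jpar_False jmult_explicit even_der_def jck_eq_iff ps,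
        simp_all add: algebra_simps)
  ultimately show ?thesis unfolding is_sder_def by simp
qed

lemma even_der_graded: "\<phi> 0 = 0 \<Longrightarrow> v \<in> Jgr \<beta> \<Longrightarrow> even_der \<phi> q v \<in> Jgr \<beta>"
  by (cases \<beta>) (rename_tac s t, case_tac s; case_tac t; simp add: Jgr_iff cb_all even_der_def)

context
  fixes p and d :: "'z jck \<Rightarrow> 'z jck"
  assumes d: "is_sder sc \<delta> Kset p d"
begin

lemma Kder_out: "v \<notin> Kset \<Longrightarrow> d v = 0"
  and Kder_in: "v \<in> Kset \<Longrightarrow> d v \<in> Kset"
  and Kder_add: "u \<in> Kset \<Longrightarrow> v \<in> Kset \<Longrightarrow> d (u + v) = d u + d v"
  and Kder_sJ: "v \<in> Kset \<Longrightarrow> d (sJ sc c v) = sJ sc c (d v)"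
  and Kder_par: "v \<in> Kset \<Longrightarrow> v \<in> Jpar q \<Longrightarrow> d v \<in> Jpar (q \<noteq> p)"
  and Kder_leib: "a \<in> Kset \<Longrightarrow> b \<in> Kset \<Longrightarrow> a \<in> Jpar q \<Longrightarrow>
     d (jmult \<delta> a b) = jmult \<delta> (d a) b + (if p \<and> q then - jmult \<delta> a (d b) else jmult \<delta> a (d b))"
  using d unfolding is_sder_def by blast+

end

lemma Kset_closed: "u \<in> Kset \<Longrightarrow> v \<in> Kset \<Longrightarrow> u + v \<in> Kset" "v \<in> Kset \<Longrightarrow> sJ sc c v \<in> Kset"
  "u \<in> Kset \<Longrightarrow> v \<in> Kset \<Longrightarrow> jmult \<delta> u v \<in> Kset"
  by (simp_all add: Kset_iff jmult_explicit)

lemma res_sder: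
  assumes D: "is_sder sc \<delta> UNIV p D" and K: "\<And>v. v \<in> Kset \<Longrightarrow> D v \<in> Kset"
  shows "is_sder sc \<delta> Kset p (res D)"
  unfolding is_sder_def res_def
  using sder_leib[OF D] sder_add[OF D] sder_sJ[OF D] sder_par[OF D] K Kset_closed by auto

lemma res_plus: "res (D0 + D1) = res D0 + (res D1 :: 'z jck \<Rightarrow> 'z jck)"
  by (simp add: res_def fun_eq_iff)

text \<open>An even derivation d0 of K maps Z1 into Z1 and x into Zx, so on K it is given by
  phi(f) = d0(f1)(1) and q = d0(x)(x).\<close>
lemma K_even_der_values:
  assumes d0: "is_sder sc \<delta> Kset False d0"
  shows "d0 (zel f) = zel (d0 (zel f) One)" and "d0 xel = single X (d0 xel X)"
    and "d0 (single X g) = single X (d0 (zel g) One + g * d0 xel X)"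
proof -
  show on_Z: "d0 (zel f) = zel (d0 (zel f) One)" for f
    using Kder_in[OF d0, of "zel f"] Kder_par[OF d0, of "zel f" False]
    by (simp add: jck_eq_iff Kset_iff Jpar_False zel_def single_def)
  show on_x: "d0 xel = single X (d0 xel X)"
    using Kder_in[OF d0, of xel] Kder_par[OF d0, of xel True]
    by (simp add: jck_eq_iff Kset_iff Jpar_True gen_defs)
  have "jmult \<delta> (zel g) xel = single X g" by (simp add: jcomp)
  then have "d0 (single X g) = jmult \<delta> (d0 (zel g)) xel + jmult \<delta> (zel g) (d0 xel)"
    using Kder_leib[OF d0, of "zel g" xel False] by simp
  then show "d0 (single X g) = single X (d0 (zel g) One + g * d0 xel X)"
    by (subst (asm) on_Z, subst (asm) on_x) (simp add: jcomp)
qed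

text \<open>Every even derivation of K is the restriction of some even_der phi q, where phi is a
  derivation of Z with phi delta = delta phi + 2 q delta (from the Leibniz rule on x x).\<close>
lemma K_even_der_shape:
  assumes d0: "is_sder sc \<delta> Kset False d0"
  obtains \<phi> q where "\<And>u v. \<phi> (u + v) = \<phi> u + \<phi> v" "\<And>c u. \<phi> (sc c u) = sc c (\<phi> u)"
    "\<And>u v. \<phi> (u * v) = \<phi> u * v + u * \<phi> v" "\<And>u. \<phi> (\<delta> u) = \<delta> (\<phi> u) + 2 * q * \<delta> u"
    "\<And>v. v \<in> Kset \<Longrightarrow> d0 v = even_der \<phi> q v"
proof -
  define \<phi> where "\<phi> f = d0 (zel f) One" for f
  define q where "q = d0 xel X"
  have on_Z: "d0 (zel f) = zel (\<phi> f)" and on_x: "d0 xel = single X q"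
    and on_Zx: "d0 (single X g) = single X (\<phi> g + g * q)" for f g
    unfolding \<phi>_def q_def using K_even_der_values[OF d0] by blast+
  have padd: "\<phi> (u + v) = \<phi> u + \<phi> v" for u v
  proof -
    have "zel (u + v) = zel u + zel v" by (simp add: gen_defs jck_eq_iff)
    then have "d0 (zel (u + v)) = d0 (zel u) + d0 (zel v)" using Kder_add[OF d0, of "zel u" "zel v"] by simp
    then show ?thesis unfolding on_Z by (simp add: gen_defs jck_eq_iff)
  qed
  have psc: "\<phi> (sc c u) = sc c (\<phi> u)" for c u
  proof -
    have "zel (sc c u) = sJ sc c (zel u)" by (simp add: gen_defs jck_eq_iff)
    then have "d0 (zel (sc c u)) = sJ sc c (d0 (zel u))" using Kder_sJ[OF d0, of "zel u" c] by simp
    then show ?thesis unfolding on_Z by (simp add: gen_defs jck_eq_iff)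
  qed
  have pmul: "\<phi> (u * v) = \<phi> u * v + u * \<phi> v" for u v
  proof -
    have "jmult \<delta> (zel u) (zel v) = zel (u * v)" by (simp add: jcomp)
    then have "d0 (zel (u * v)) = jmult \<delta> (d0 (zel u)) (zel v) + jmult \<delta> (zel u) (d0 (zel v))"
      using Kder_leib[OF d0, of "zel u" "zel v" False] by simp
    then show ?thesis unfolding on_Z by (simp add: jcomp)
  qed
  have pd: "\<phi> (\<delta> u) = \<delta> (\<phi> u) + 2 * q * \<delta> u" for u
  proof -
    have "jmult \<delta> (single X u) xel = zel (\<delta> u)" by (simp add: jcomp)
    then have "d0 (zel (\<delta> u)) = jmult \<delta> (d0 (single X u)) xel + jmult \<delta> (single X u) (d0 xel)"
      using Kder_leib[OF d0, of "single X u" xel True] by simp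
    then have "\<phi> (\<delta> u) = \<delta> (\<phi> u + u * q) + \<delta> u * q - u * \<delta> q"
      unfolding on_Z on_x on_Zx by (simp add: jcomp)
    then show ?thesis by (simp add: algebra_simps mult_2)
  qed
  have "d0 v = even_der \<phi> q v" if "v \<in> Kset" for v
  proof -
    have "d0 v = d0 (zel (v One)) + d0 (single X (v X))"
      using Kder_add[OF d0, of "zel (v One)" "single X (v X)"] K_decomp[OF that] by simp
    then show ?thesis using that padd[of 0 0]
      unfolding on_Z on_Zx by (simp add: gen_defs jck_eq_iff even_der_def Kset_iff)
  qed
  then show ?thesis using that padd psc pmul pd by blast
qed

lemma eta_shape:
  assumes "is_eta sc \<delta> a e" and "v \<in> Kset"
  shows "e v = zel (v X * a)"
proof -
  have eS: "is_sder sc \<delta> Kset True e" and e1: "\<And>f. e (zel f) = 0" and e2: "e xel = zel a"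
    using assms(1) unfolding is_eta_def by auto
  have "jmult \<delta> (zel (v X)) xel = single X (v X)" by (simp add: jcomp)
  then have "e (single X (v X)) = jmult \<delta> (e (zel (v X))) xel + jmult \<delta> (zel (v X)) (e xel)"
    using Kder_leib[OF eS, of "zel (v X)" xel False] by simp
  then have "e (single X (v X)) = zel (v X * a)" unfolding e1 e2 by (simp add: jcomp)
  moreover have "e v = e (zel (v One)) + e (single X (v X))"
    using Kder_add[OF eS, of "zel (v One)" "single X (v X)"] K_decomp[OF assms(2)] by simp
  ultimately show ?thesis using e1 by simp
qed

lemma res_image:
  assumes "D \<in> Der00 sc \<delta>"
  shows "res D \<in> Derbar sc \<delta>"
proof -
  obtain D0 D1 where D: "D = D0 + D1" and S0: "is_sder sc \<delta> UNIV False D0"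
    and S1: "is_sder sc \<delta> UNIV True D1" and G0: "\<And>\<beta> v. v \<in> Jgr \<beta> \<Longrightarrow> D0 v \<in> Jgr \<beta>"
    and G1: "\<And>\<beta> v. v \<in> Jgr \<beta> \<Longrightarrow> D1 v \<in> Jgr \<beta>"
    using Der00_split[OF assms] by metis
  have K0: "D0 v \<in> Kset" and K1: "D1 v \<in> Kset" if "v \<in> Kset" for v
    using G0 G1 that unfolding Kset_Jgr by blast+
  define b where "b = D1 (wel I1) (Xi I1)"
  have D1: "D1 = odd_der \<delta> 0 0 0 b" unfolding b_def by (rule odd_graded[OF S1 G1])
  have "is_eta sc \<delta> (- b) (res D1)"
    unfolding is_eta_def using res_sder[OF S1 K1] by (simp add: res_def D1 odd_der_on_K)
  moreover have "is_sder sc \<delta> Kset False (res D0)" by (rule res_sder[OF S0 K0])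
  ultimately show ?thesis unfolding Derbar_def D res_plus by blast
qed

text \<open>Injectivity: the odd parts odd_der 0 0 0 b are told apart by the value at x, and the
  difference of the even parts is a graded even derivation vanishing on K.\<close>
lemma res_inj:
  assumes A: "D \<in> Der00 sc \<delta>" and B: "D' \<in> Der00 sc \<delta>" and R: "res D = res D'"
  shows "D = D'"
proof -
  obtain D0 D1 where D: "D = D0 + D1" and S0: "is_sder sc \<delta> UNIV False D0"
    and S1: "is_sder sc \<delta> UNIV True D1" and G0: "\<And>\<beta> v. v \<in> Jgr \<beta> \<Longrightarrow> D0 v \<in> Jgr \<beta>"
    and G1: "\<And>\<beta> v. v \<in> Jgr \<beta> \<Longrightarrow> D1 v \<in> Jgr \<beta>"
    using Der00_split[OF A] by metis
  obtain D0' D1' where D': "D' = D0' + D1'" and S0': "is_sder sc \<delta> UNIV False D0'"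
    and S1': "is_sder sc \<delta> UNIV True D1'" and G0': "\<And>\<beta> v. v \<in> Jgr \<beta> \<Longrightarrow> D0' v \<in> Jgr \<beta>"
    and G1': "\<And>\<beta> v. v \<in> Jgr \<beta> \<Longrightarrow> D1' v \<in> Jgr \<beta>"
    using Der00_split[OF B] by metis
  have on_K: "D0 v + D1 v = D0' v + D1' v" if "v \<in> Kset" for v
    using fun_cong[OF R, of v] that by (simp add: res_def D D')
  define b where "b = D1 (wel I1) (Xi I1)"
  define b' where "b' = D1' (wel I1) (Xi I1)"
  have E1: "D1 = odd_der \<delta> 0 0 0 b" unfolding b_def by (rule odd_graded[OF S1 G1])
  have E1': "D1' = odd_der \<delta> 0 0 0 b'" unfolding b'_def by (rule odd_graded[OF S1' G1'])
  have "D0 xel \<in> Jpar True" "D0' xel \<in> Jpar True"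
    using sder_par[OF S0, of xel True] sder_par[OF S0', of xel True] by simp_all
  moreover have "par0 (D0 xel + D1 xel) = par0 (D0' xel + D1' xel)" using on_K[of xel] by simp
  ultimately have "zel (- b) = zel (- b')" by (simp add: par_add par_id E1 E1' odd_der_on_K)
  then have "zel (- b) One = zel (- b') One" by simp
  then have "b = b'" by (simp add: zel_def single_def)
  then have odd_eq: "D1 = D1'" using E1 E1' by simp
  have "D0 - D0' = 0"
  proof (rule even_graded_rigid[OF sder_diff[OF S0 S0']])
    show "(D0 - D0') v \<in> Jgr \<beta>" if "v \<in> Jgr \<beta>" for \<beta> v
      using G0[OF that] G0'[OF that] by (simp add: Jgr_diff)
    show "(D0 - D0') (zel f) = 0" for f using on_K[of "zel f"] odd_eq by simp
    show "(D0 - D0') xel = 0" using on_K[of xel] odd_eq by simp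
  qed
  then show ?thesis using D D' odd_eq by simp
qed

text \<open>Surjectivity: d0 + eta_a is the restriction of even_der phi q + odd_der 0 0 0 (-a).\<close>
lemma res_surj:
  assumes d0: "is_sder sc \<delta> Kset False d0" and e: "is_eta sc \<delta> a e"
  shows "d0 + e \<in> res ` Der00 sc \<delta>"
proof -
  obtain \<phi> q where padd: "\<And>u v. \<phi> (u + v) = \<phi> u + \<phi> v" and psc: "\<And>c u. \<phi> (sc c u) = sc c (\<phi> u)"
    and pmul: "\<And>u v. \<phi> (u * v) = \<phi> u * v + u * \<phi> v" and pd: "\<And>u. \<phi> (\<delta> u) = \<delta> (\<phi> u) + 2 * q * \<delta> u"
    and d0_eq: "\<And>v. v \<in> Kset \<Longrightarrow> d0 v = even_der \<phi> q v"
    using K_even_der_shape[OF d0] by metis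
  have eS: "is_sder sc \<delta> Kset True e" using e unfolding is_eta_def by simp
  have p0: "\<phi> 0 = 0" using padd[of 0 0] by simp
  define D where "D = even_der \<phi> q + odd_der \<delta> 0 0 0 (- a)"
  have "D \<in> Der sc \<delta> UNIV"
    unfolding Der_def D_def using even_der_sder[OF padd psc pmul pd] odd_der_sder by blast
  moreover have "D v \<in> Jgr \<beta>" if "v \<in> Jgr \<beta>" for \<beta> v
    unfolding D_def using Jgr_add[OF even_der_graded[where \<phi> = \<phi>, OF p0 that] odd_der_graded[OF that]] by simp
  ultimately have "D \<in> Der00 sc \<delta>" unfolding Der00_def by blast
  moreover have "res D = d0 + e"
  proof (rule ext)
    fix v :: "'z jck"
    show "res D v = (d0 + e) v"
    proof (cases "v \<in> Kset")
      case True
      then show ?thesis using d0_eq[OF True] eta_shape[OF e True]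
        by (simp add: res_def D_def even_der_def odd_der_def Kset_iff gen_defs jck_eq_iff p0)
    next
      case False
      then show ?thesis using Kder_out[OF d0 False] Kder_out[OF eS False] by (simp add: res_def)
    qed
  qed
  ultimately show ?thesis by (metis image_eqI)
qed

theorem restriction_bijective: "inj_on res (Der00 sc \<delta>) \<and> res ` Der00 sc \<delta> = Derbar sc \<delta>"
  using res_inj res_image res_surj unfolding inj_on_def Derbar_def by blast

section \<open>Part (iii): a basis of Der(J)_1\<close>

definition gen_basis :: "cb set \<Rightarrow> 'z set \<Rightarrow> 'z jck set" where
  "gen_basis E BZ = (\<lambda>(e, z). single e z) ` (E \<times> BZ)"

lemma single_hom: "module_hom sc (sJ sc) (single e)"
  unfolding module_hom_iff module_iff_vector_space using vs vs_sJ
  by (simp add: single_def fun_eq_iff Z.scale_right_distrib)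

lemma coord_hom: "module_hom (sJ sc) sc (\<lambda>v. v e)"
  unfolding module_hom_iff module_iff_vector_space using vs vs_sJ by simp

lemma gen_basis_inj:
  assumes "0 \<notin> BZ"
  shows "inj_on (\<lambda>(e, z). single e z) (E \<times> BZ)"
proof (rule inj_onI, clarify)
  fix e z e' z' assume z: "z \<in> BZ" and eq: "single e z = single e' z'"
  then have "single e z e = single e' z' e" "single e z e' = single e' z' e'" by simp_all
  then show "e = e' \<and> z = z'" using assms z by (cases "e = e'") (auto simp: single_def)
qed

text \<open>Independence: projecting onto the coordinate e would express z as a combination of
  the other elements of BZ.\<close>
lemma gen_basis_independent:
  assumes BZ: "Z.independent BZ"
  shows "J.independent (gen_basis E BZ)"
proof
  assume "J.dependent (gen_basis E BZ)"
  then obtain e z where ez: "e \<in> E" "z \<in> BZ"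
    and dep: "single e z \<in> J.span (gen_basis E BZ - {single e z})"
    unfolding J.dependent_def gen_basis_def by auto
  have "(\<lambda>v. v e) ` (gen_basis E BZ - {single e z}) \<subseteq> insert 0 (BZ - {z})"
  proof
    fix c assume "c \<in> (\<lambda>v. v e) ` (gen_basis E BZ - {single e z})"
    then obtain a b where c: "c = single a b e" and b: "b \<in> BZ" and ne: "single a b \<noteq> single e z"
      unfolding gen_basis_def by auto
    show "c \<in> insert 0 (BZ - {z})"
    proof (cases "a = e")
      case True
      then have "b \<noteq> z" using ne by blast
      then show ?thesis using c b True by (simp add: single_def)
    next
      case False
      then show ?thesis using c by (simp add: single_def)
    qed
  qed
  then have "Z.span ((\<lambda>v. v e) ` (gen_basis E BZ - {single e z})) \<subseteq> Z.span (BZ - {z})"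
    using Z.span_mono by (metis Z.span_insert_0)
  moreover have "z \<in> (\<lambda>v. v e) ` J.span (gen_basis E BZ - {single e z})"
    using dep by (rule rev_image_eqI) (simp add: single_def)
  then have "z \<in> Z.span ((\<lambda>v. v e) ` (gen_basis E BZ - {single e z}))"
    by (simp add: module_hom.span_image[OF coord_hom])
  ultimately have "Z.dependent BZ" using ez(2) unfolding Z.dependent_def by blast
  then show False using BZ by contradiction
qed

lemma gen_basis_spans:
  assumes E: "finite E" and BZ: "Z.span BZ = UNIV"
  shows "{v. \<forall>k. k \<notin> E \<longrightarrow> v k = 0} \<subseteq> J.span (gen_basis E BZ)"
  using E
proof (induction E rule: finite_induct)
  case empty
  show ?case
  proof
    fix v :: "'z jck" assume "v \<in> {v. \<forall>k. k \<notin> {} \<longrightarrow> v k = 0}"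
    then have "v = 0" by (simp add: fun_eq_iff)
    then show "v \<in> J.span (gen_basis {} BZ)" by (simp add: J.span_zero)
  qed
next
  case (insert e F)
  have mono: "J.span (gen_basis F BZ) \<subseteq> J.span (gen_basis (insert e F) BZ)"
    unfolding gen_basis_def by (intro J.span_mono image_mono) auto
  have "single e ` UNIV \<subseteq> J.span (single e ` BZ)"
    using module_hom.spans_image[OF single_hom, of UNIV BZ] BZ by simp
  moreover have "single e ` BZ \<subseteq> gen_basis (insert e F) BZ"
    unfolding gen_basis_def by force
  then have "J.span (single e ` BZ) \<subseteq> J.span (gen_basis (insert e F) BZ)"
    by (rule J.span_mono)
  ultimately have head: "single e f \<in> J.span (gen_basis (insert e F) BZ)" for f by blast
  show ?case
  proof
    fix v :: "'z jck" assume "v \<in> {v. \<forall>k. k \<notin> insert e F \<longrightarrow> v k = 0}"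
    then have "v(e := 0) \<in> {v. \<forall>k. k \<notin> F \<longrightarrow> v k = 0}" by auto
    then have "v(e := 0) \<in> J.span (gen_basis (insert e F) BZ)" using insert.IH mono by blast
    moreover have "v = single e (v e) + v(e := 0)" by (simp add: single_def fun_eq_iff)
    ultimately show "v \<in> J.span (gen_basis (insert e F) BZ)" using head J.span_add by metis
  qed
qed

lemma gen_basis_basis:
  assumes "finite E" "is_basis_of sc UNIV BZ"
  shows "is_basis_of (sJ sc) {v. \<forall>k. k \<notin> E \<longrightarrow> v k = 0} (gen_basis E BZ)"
proof -
  have sub: "J.subspace {v. \<forall>k. k \<notin> E \<longrightarrow> v k = (0::'z)}"
    unfolding J.subspace_def by simp
  have gen: "gen_basis E BZ \<subseteq> {v. \<forall>k. k \<notin> E \<longrightarrow> v k = 0}"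
    by (auto simp: gen_basis_def single_def)
  have ind: "Z.independent BZ" and span: "Z.span BZ = UNIV"
    using assms(2) unfolding is_basis_of_def by auto
  have "J.span (gen_basis E BZ) = {v. \<forall>k. k \<notin> E \<longrightarrow> v k = 0}"
    using J.span_minimal[OF gen sub] gen_basis_spans[OF assms(1) span] by (rule subset_antisym)
  then show ?thesis
    unfolding is_basis_of_def using gen gen_basis_independent[OF ind] by simp
qed

lemma Jpar_True_support: "Jpar True = {v. \<forall>k. k \<notin> {X, Xi I1, Xi I2, Xi I3} \<longrightarrow> v k = 0}"
  unfolding Jpar_def by (auto simp: cb_all)

lemma odd_generators_eqpoll: "{X, Xi I1, Xi I2, Xi I3} \<times> BZ \<approx> {..<4::nat} \<times> BZ"
  by (rule times_eqpoll_cong) (simp_all add: eqpoll_iff_card eqpoll_refl)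

definition odd_der_of :: "'z jck \<Rightarrow> ('z jck \<Rightarrow> 'z jck)" where
  "odd_der_of v = odd_der \<delta> (v (Xi I1)) (v (Xi I2)) (v (Xi I3)) (v X)"

lemma odd_der_of_hom: "module_hom (sJ sc) (sE sc) odd_der_of"
proof -
  have "odd_der_of (v + w) = odd_der_of v + odd_der_of w" for v w
    by (rule ext) (simp add: odd_der_of_def odd_der_def jck_eq_iff algebra_simps)
  moreover have "odd_der_of (sJ sc c v) = sE sc c (odd_der_of v)" for c v
    by (rule ext) (simp add: odd_der_of_def odd_der_def jck_eq_iff sE_def del: sc_mult1,
        simp add: sc_as_mult algebra_simps del: sc_mult1)
  ultimately show ?thesis
    unfolding module_hom_iff module_iff_vector_space using vs_sJ vs_sE by blast
qed

lemma odd_der_of_inj: "inj_on odd_der_of (Jpar True)"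
proof (rule inj_onI)
  fix v w assume v: "v \<in> Jpar True" and w: "w \<in> Jpar True" and eq: "odd_der_of v = odd_der_of w"
  have "odd_der_of v (wel i) k = odd_der_of w (wel i) k" for i k using eq by simp
  from this[of I1 X] this[of I2 X] this[of I3 X] this[of I1 "Xi I1"] v w
  show "v = w" by (simp add: odd_der_of_def odd_der_def gen_defs jck_eq_iff Jpar_True)
qed

lemma odd_der_of_image: "odd_der_of ` Jpar True = {D. is_sder sc \<delta> UNIV True D}"
proof (intro equalityI subsetI)
  fix D assume "D \<in> odd_der_of ` Jpar True"
  then show "D \<in> {D. is_sder sc \<delta> UNIV True D}" by (auto simp: odd_der_of_def odd_der_sder)
next
  fix D assume "D \<in> {D. is_sder sc \<delta> UNIV True D}"
  then have "D = odd_der_of (jvec 0 0 0 0 (D (wel I1) (Xi I1)) (D (wel I1) X) (D (wel I2) X) (D (wel I3) X))"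
    using odd_der_structure by (simp add: odd_der_of_def)
  moreover have "jvec 0 0 0 0 (D (wel I1) (Xi I1)) (D (wel I1) X) (D (wel I2) X) (D (wel I3) X) \<in> Jpar True"
    by (simp add: Jpar_True)
  ultimately show "D \<in> odd_der_of ` Jpar True" by blast
qed

lemma odd_der_basis:
  assumes BJ: "is_basis_of (sJ sc) (Jpar True) BJ"
  shows "is_basis_of (sE sc) {D. is_sder sc \<delta> UNIV True D} (odd_der_of ` BJ)"
    and "odd_der_of ` BJ \<approx> BJ"
proof -
  have sub: "BJ \<subseteq> Jpar True" and ind: "J.independent BJ" and span: "J.span BJ = Jpar True"
    using BJ unfolding is_basis_of_def by auto
  have "E.independent (odd_der_of ` BJ)"
    using module_hom.independent_injective_image[OF odd_der_of_hom ind] odd_der_of_inj span by simp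
  moreover have "E.span (odd_der_of ` BJ) = {D. is_sder sc \<delta> UNIV True D}"
    using module_hom.span_image[OF odd_der_of_hom, of BJ] span odd_der_of_image by simp
  ultimately show "is_basis_of (sE sc) {D. is_sder sc \<delta> UNIV True D} (odd_der_of ` BJ)"
    using sub odd_der_of_image unfolding is_basis_of_def by blast
  show "odd_der_of ` BJ \<approx> BJ"
    using inj_on_image_eqpoll_self inj_on_subset[OF odd_der_of_inj sub] by blast
qed

theorem odd_ders_dimension: "\<exists>B BZ BJ. is_basis_of (sE sc) {D. is_sder sc \<delta> UNIV True D} B
    \<and> is_basis_of sc UNIV BZ \<and> is_basis_of (sJ sc) (Jpar True) BJ
    \<and> B \<approx> {..<4::nat} \<times> BZ \<and> BJ \<approx> {..<4::nat} \<times> BZ"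
proof -
  obtain BZ where "Z.independent BZ" "UNIV \<subseteq> Z.span BZ" using Z.basis_exists[of UNIV] by blast
  then have BZ: "is_basis_of sc UNIV BZ" unfolding is_basis_of_def by auto
  then have "0 \<notin> BZ" using Z.dependent_zero unfolding is_basis_of_def by blast
  define BJ where "BJ = gen_basis {X, Xi I1, Xi I2, Xi I3} BZ"
  have BJ: "is_basis_of (sJ sc) (Jpar True) BJ"
    unfolding BJ_def Jpar_True_support by (rule gen_basis_basis[OF _ BZ]) simp
  have "BJ \<approx> {X, Xi I1, Xi I2, Xi I3} \<times> BZ"
    unfolding BJ_def gen_basis_def by (rule inj_on_image_eqpoll_self[OF gen_basis_inj[OF \<open>0 \<notin> BZ\<close>]])
  then have BJ4: "BJ \<approx> {..<4::nat} \<times> BZ" using odd_generators_eqpoll eqpoll_trans by blast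
  have B: "is_basis_of (sE sc) {D. is_sder sc \<delta> UNIV True D} (odd_der_of ` BJ)"
    and "odd_der_of ` BJ \<approx> BJ" using odd_der_basis[OF BJ] by auto
  then have B4: "odd_der_of ` BJ \<approx> {..<4::nat} \<times> BZ" using BJ4 eqpoll_trans by blast
  show ?thesis by (intro exI conjI; fact B BZ BJ B4 BJ4)
qed

end

theorem corollary4p4:
  fixes sc :: "'f::field \<Rightarrow> 'z::comm_ring_1 \<Rightarrow> 'z" and \<delta> :: "'z \<Rightarrow> 'z"
  assumes "(2::'f) \<noteq> 0"
    and "vector_space sc"
    and "\<forall>c u v. sc c (u * v) = sc c u * v"
    and "\<forall>u v. \<delta> (u + v) = \<delta> u + \<delta> v"
    and "\<forall>c u. \<delta> (sc c u) = sc c (\<delta> u)"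
    and "\<forall>u v. \<delta> (u * v) = \<delta> u * v + u * \<delta> v"
    and "module.span sc {f * \<delta> g | f g. True} = UNIV"
  shows "({D. is_sder sc \<delta> UNIV True D} = Inder sc \<delta> \<inter> {D. odd_map D})
    \<and> (inj_on res (Der00 sc \<delta>) \<and> res ` Der00 sc \<delta> = Derbar sc \<delta>)
    \<and> (\<exists>B BZ BJ. is_basis_of (sE sc) {D. is_sder sc \<delta> UNIV True D} B
            \<and> is_basis_of sc UNIV BZ \<and> is_basis_of (sJ sc) (Jpar True) BJ
            \<and> B \<approx> {..<4::nat} \<times> BZ \<and> BJ \<approx> {..<4::nat} \<times> BZ)"
proof -
  interpret cheng_kac sc \<delta> unfolding cheng_kac_def using assms by blast
  show ?thesis
    using odd_derivations_inner restriction_bijective odd_ders_dimension by blast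
qed

end
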